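(* Let $K$ be a nonnegative function on $\mathbb{R}$ with $\int K(x)\,dx=1$, which is bounded, satisfies $\int x^2K(x)\,dx<+\infty$, and is monotone on some neighborhood of $-\infty$ and on some neighborhood of $+\infty$. For $w>0$ let $K_w(y)=w^{-1}K(w^{-1}y)$ and, given $X_1,\dots,X_n$ i.i.d. with density $s$ with respect to Lebesgue measure, let $\widehat{s}_w(x)=\frac1n\sum_{i=1}^nK_w(x-X_i)$. Assume $s$ is supported on an interval of length $2L$, and let $\phi$ be a nondecreasing concave function on $[0,+\infty)$ with $\phi(0)=0$ and $\omega_2(\sqrt{s},\eta)\le\phi(\eta)$ for all $\eta\ge0$, where \[ \omega_2(\sqrt{s},\eta)=\sup_{|z|\le\eta}\left\|\sqrt{s}(\cdot+z)-\sqrt{s}\right\|. \] Then there is a constant $C(K)$ depending only on $K$, equal to $1$ when $K$ is unimodal, such that for all $w>0$, \[ \mathbb{E}_s\left[h^2(\widehat{s}_w,s)\right]\le2\left[\int_{\mathbb{R}}(1\vee x^2)K(x)\,dx\right]\phi^2(w)+\frac{2L\|K\|_\infty}{nw}+\frac{C(K)}{n}. \]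
   Context: $\|\cdot\|$ denotes the $\mathbb{L}_2$-norm with respect to Lebesgue measure on $\mathbb{R}$. For densities $t,u$, $h^2(t,u)=\frac12\int(\sqrt{t}-\sqrt{u})^2\,dx$ is the squared Hellinger distance. *)

theory Defs
  imports "HOL-Probability.Probability"
begin

definition L2norm :: "(real \<Rightarrow> real) \<Rightarrow> real" where
  "L2norm f = sqrt (LINT x|lborel. (f x)\<^sup>2)"

definition hellinger2 :: "(real \<Rightarrow> real) \<Rightarrow> (real \<Rightarrow> real) \<Rightarrow> real" where
  "hellinger2 t u = (1/2) * (LINT x|lborel. (sqrt (t x) - sqrt (u x))\<^sup>2)"

definition omega2 :: "(real \<Rightarrow> real) \<Rightarrow> real \<Rightarrow> real" where
  "omega2 f \<eta> = (SUP z\<in>{z. \<bar>z\<bar> \<le> \<eta>}. L2norm (\<lambda>x. f (x + z) - f x))"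

definition kernel_w :: "(real \<Rightarrow> real) \<Rightarrow> real \<Rightarrow> real \<Rightarrow> real" where
  "kernel_w K w y = K (y / w) / w"

definition kde :: "(real \<Rightarrow> real) \<Rightarrow> nat \<Rightarrow> real \<Rightarrow> (nat \<Rightarrow> real) \<Rightarrow> real \<Rightarrow> real" where
  "kde K n w X x = (1 / real n) * (\<Sum>i<n. kernel_w K w (x - X i))"

definition monotone_either :: "real set \<Rightarrow> (real \<Rightarrow> real) \<Rightarrow> bool" where
  "monotone_either S f \<longleftrightarrow> mono_on S f \<or> monotone_on S (\<le>) (\<ge>) f"

definition unimodal :: "(real \<Rightarrow> real) \<Rightarrow> bool" where
  "unimodal f \<longleftrightarrow> (\<exists>m. mono_on {..m} f \<and> monotone_on {m..} (\<le>) (\<ge>) f)"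

end

theory Submission
  imports Defs
begin

(*
  For fixed x, the estimate kde(x) is the empirical mean of n i.i.d. copies of K_w(x - X),
  bounded by sup K / w, with mean m(x) = (K_w * s)(x) and variance at most
  sup K m(x) / (n w).  Since (sqrt y - sqrt m)^2 <= (y - m)^2 / m, this gives
    E (sqrt kde(x) - sqrt s(x))^2 <= 2 (sqrt m(x) - sqrt s(x))^2 + 2 sup K / (n w),
  where the last term is only needed where s(x) > 0, i.e. on an interval of length 2L.
  For the bias, concavity of sqrt (Jensen) bounds (sqrt m(x) - sqrt s(x))^2 by
  int K_w(z) (sqrt s(x - z) - sqrt s(x))^2 dz; integrating in x and using
  omega_2(sqrt s, |z|) <= phi(|z|) <= max 1 (|z| / w) phi(w) (concavity of phi)
  yields the bias bound int (1 v x^2) K(x) dx phi(w)^2.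
  The argument gives the bound even without the factor 2 and the C/n term, and it
  does not use the monotonicity of K near -oo and +oo; so C = 1 works for every K.
*)

lemma sqrt_diff_sq_mult_le:
  fixes y m :: real
  assumes "0 \<le> y" "0 \<le> m"
  shows "(sqrt y - sqrt m)\<^sup>2 * m \<le> (y - m)\<^sup>2"
proof -
  have "(sqrt y - sqrt m)\<^sup>2 * (sqrt m)\<^sup>2 \<le> (sqrt y - sqrt m)\<^sup>2 * (sqrt y + sqrt m)\<^sup>2"
    using assms by (intro mult_left_mono power_mono) auto
  also have "\<dots> = (y - m)\<^sup>2"
    using assms by (simp add: power_mult_distrib[symmetric] algebra_simps power2_eq_square)
  finally show ?thesis using assms by simp
qed

lemma diff_sq_le_twice:
  fixes a b c :: real
  shows "(a - c)\<^sup>2 \<le> 2 * (a - b)\<^sup>2 + 2 * (b - c)\<^sup>2"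
proof -
  have "2 * (a - b)\<^sup>2 + 2 * (b - c)\<^sup>2 - (a - c)\<^sup>2 = (a - 2 * b + c)\<^sup>2"
    by (simp add: power2_eq_square algebra_simps)
  then show ?thesis by (smt (verit) zero_le_power2)
qed

context prob_space
begin

lemma expectation_sqrt_diff_sq_mean_le:
  fixes Y :: "'a \<Rightarrow> real"
  assumes Y_meas: "Y \<in> borel_measurable M"
    and Y_bounds: "\<And>\<omega>. \<omega> \<in> space M \<Longrightarrow> 0 \<le> Y \<omega> \<and> Y \<omega> \<le> b"
    and mean: "expectation Y = m" and var: "expectation (\<lambda>\<omega>. (Y \<omega> - m)\<^sup>2) \<le> c * m"
    and "0 \<le> c"
  shows "expectation (\<lambda>\<omega>. (sqrt (Y \<omega>) - sqrt m)\<^sup>2) \<le> c"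
proof -
  have m_nonneg: "0 \<le> m"
    unfolding mean[symmetric] using Y_bounds by (intro Bochner_Integration.integral_nonneg) auto
  show ?thesis
  proof (cases "m = 0")
    case True
    have "expectation (\<lambda>\<omega>. (sqrt (Y \<omega>) - sqrt m)\<^sup>2) = expectation Y"
      using True Y_bounds by (intro Bochner_Integration.integral_cong) auto
    then show ?thesis using True mean \<open>0 \<le> c\<close> by simp
  next
    case False
    then have "0 < m" using m_nonneg by simp
    have var_int: "integrable M (\<lambda>\<omega>. (Y \<omega> - m)\<^sup>2)"
    proof (rule integrable_const_bound[where B="(b + m)\<^sup>2"])
      show "AE \<omega> in M. norm ((Y \<omega> - m)\<^sup>2) \<le> (b + m)\<^sup>2"
      proof (rule AE_I2)
        fix \<omega> assume "\<omega> \<in> space M"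
        then have "\<bar>Y \<omega> - m\<bar> \<le> \<bar>b + m\<bar>" using Y_bounds m_nonneg by fastforce
        then show "norm ((Y \<omega> - m)\<^sup>2) \<le> (b + m)\<^sup>2" by (simp add: abs_le_square_iff)
      qed
    qed (use Y_meas in simp)
    have "expectation (\<lambda>\<omega>. (sqrt (Y \<omega>) - sqrt m)\<^sup>2) \<le> expectation (\<lambda>\<omega>. (Y \<omega> - m)\<^sup>2 / m)"
    proof (rule integral_mono_AE')
      show "AE \<omega> in M. (sqrt (Y \<omega>) - sqrt m)\<^sup>2 \<le> (Y \<omega> - m)\<^sup>2 / m"
        using Y_bounds sqrt_diff_sq_mult_le \<open>0 < m\<close>
        by (intro AE_I2) (simp add: pos_le_divide_eq)
    qed (use var_int m_nonneg in auto)
    also have "\<dots> \<le> c" using var \<open>0 < m\<close> by (simp add: pos_divide_le_eq)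
    finally show ?thesis .
  qed
qed

lemma integrable_sqrt_diff_sq:
  fixes Y :: "'a \<Rightarrow> real"
  assumes Y_meas: "Y \<in> borel_measurable M"
    and Y_bounds: "\<And>\<omega>. \<omega> \<in> space M \<Longrightarrow> 0 \<le> Y \<omega> \<and> Y \<omega> \<le> b" and "0 \<le> t"
  shows "integrable M (\<lambda>\<omega>. (sqrt (Y \<omega>) - sqrt t)\<^sup>2)"
proof (rule integrable_const_bound[where B="2 * b + 2 * t"])
  show "AE \<omega> in M. norm ((sqrt (Y \<omega>) - sqrt t)\<^sup>2) \<le> 2 * b + 2 * t"
  proof (rule AE_I2)
    fix \<omega> assume "\<omega> \<in> space M"
    have "(sqrt (Y \<omega>) - sqrt t)\<^sup>2 \<le> 2 * (sqrt (Y \<omega>) - 0)\<^sup>2 + 2 * (0 - sqrt t)\<^sup>2"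
      by (rule diff_sq_le_twice)
    then show "norm ((sqrt (Y \<omega>) - sqrt t)\<^sup>2) \<le> 2 * b + 2 * t"
      using Y_bounds[OF \<open>\<omega> \<in> space M\<close>] \<open>0 \<le> t\<close> by simp
  qed
qed (use Y_meas in simp)

lemma expectation_sqrt_diff_sq_le:
  fixes Y :: "'a \<Rightarrow> real"
  assumes Y_meas: "Y \<in> borel_measurable M"
    and Y_bounds: "\<And>\<omega>. \<omega> \<in> space M \<Longrightarrow> 0 \<le> Y \<omega> \<and> Y \<omega> \<le> b"
    and mean: "expectation Y = m" and var: "expectation (\<lambda>\<omega>. (Y \<omega> - m)\<^sup>2) \<le> c * m"
    and "0 \<le> c" "0 \<le> t"
  shows "expectation (\<lambda>\<omega>. (sqrt (Y \<omega>) - sqrt t)\<^sup>2)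
    \<le> 2 * (sqrt m - sqrt t)\<^sup>2 + (if t = 0 then 0 else 2 * c)"
proof -
  have "0 \<le> m"
    unfolding mean[symmetric] using Y_bounds by (intro Bochner_Integration.integral_nonneg) auto
  show ?thesis
  proof (cases "t = 0")
    case True
    have "expectation (\<lambda>\<omega>. (sqrt (Y \<omega>) - sqrt t)\<^sup>2) = m"
      unfolding mean[symmetric] using True Y_bounds by (intro Bochner_Integration.integral_cong) auto
    then show ?thesis using True \<open>0 \<le> m\<close> by simp
  next
    case False
    have "expectation (\<lambda>\<omega>. (sqrt (Y \<omega>) - sqrt t)\<^sup>2)
        \<le> expectation (\<lambda>\<omega>. 2 * (sqrt (Y \<omega>) - sqrt m)\<^sup>2 + 2 * (sqrt m - sqrt t)\<^sup>2)"
      using integrable_sqrt_diff_sq[OF Y_meas Y_bounds] \<open>0 \<le> m\<close> \<open>0 \<le> t\<close>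
      by (intro integral_mono diff_sq_le_twice) auto
    also have "\<dots> = 2 * expectation (\<lambda>\<omega>. (sqrt (Y \<omega>) - sqrt m)\<^sup>2) + 2 * (sqrt m - sqrt t)\<^sup>2"
      using integrable_sqrt_diff_sq[OF Y_meas Y_bounds \<open>0 \<le> m\<close>] by (simp add: prob_space)
    also have "\<dots> \<le> 2 * c + 2 * (sqrt m - sqrt t)\<^sup>2"
      using expectation_sqrt_diff_sq_mean_le[OF Y_meas Y_bounds mean var \<open>0 \<le> c\<close>] by simp
    finally show ?thesis using False by simp
  qed
qed

lemma sqrt_expectation_diff_sq_le:
  fixes f :: "'a \<Rightarrow> real"
  assumes f_meas: "f \<in> borel_measurable M" and f_nonneg: "\<And>\<omega>. \<omega> \<in> space M \<Longrightarrow> 0 \<le> f \<omega>"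
    and f_int: "integrable M f" and "0 \<le> t"
  shows "(sqrt (expectation f) - sqrt t)\<^sup>2 \<le> expectation (\<lambda>\<omega>. (sqrt (f \<omega>) - sqrt t)\<^sup>2)"
proof -
  have sq_int: "integrable M (\<lambda>\<omega>. (sqrt (f \<omega>))\<^sup>2)"
    by (rule Bochner_Integration.integrable_cong[THEN iffD2, OF refl _ f_int]) (simp add: f_nonneg)
  have sq_mean: "expectation (\<lambda>\<omega>. (sqrt (f \<omega>))\<^sup>2) = expectation f"
    by (rule Bochner_Integration.integral_cong) (simp_all add: f_nonneg)
  have sqrt_int: "integrable M (\<lambda>\<omega>. sqrt (f \<omega>))"
    by (rule square_integrable_imp_integrable[OF _ sq_int]) (use f_meas in simp)
  have sqrt_mean_le: "expectation (\<lambda>\<omega>. sqrt (f \<omega>)) \<le> sqrt (expectation f)"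
  proof -
    have "(expectation (\<lambda>\<omega>. sqrt (f \<omega>)))\<^sup>2 \<le> expectation f"
      using variance_positive[of "\<lambda>\<omega>. sqrt (f \<omega>)"] variance_eq[OF sqrt_int sq_int] sq_mean
      by linarith
    then show ?thesis using real_le_rsqrt by blast
  qed
  have "expectation (\<lambda>\<omega>. (sqrt (f \<omega>) - sqrt t)\<^sup>2)
      = expectation (\<lambda>\<omega>. f \<omega> - 2 * sqrt t * sqrt (f \<omega>) + t)"
    using f_nonneg \<open>0 \<le> t\<close>
    by (intro Bochner_Integration.integral_cong) (auto simp: power2_diff algebra_simps)
  also have "\<dots> = expectation f - 2 * sqrt t * expectation (\<lambda>\<omega>. sqrt (f \<omega>)) + t"
    using f_int sqrt_int by (simp add: prob_space)
  also have "\<dots> \<ge> expectation f - 2 * sqrt t * sqrt (expectation f) + t"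
    using sqrt_mean_le by (simp add: mult_left_mono \<open>0 \<le> t\<close>)
  moreover have "(sqrt (expectation f) - sqrt t)\<^sup>2 = expectation f - 2 * sqrt t * sqrt (expectation f) + t"
    using f_nonneg \<open>0 \<le> t\<close> Bochner_Integration.integral_nonneg[of M f]
    by (simp add: power2_diff algebra_simps)
  ultimately show ?thesis by linarith
qed

lemma variance_le_bound_mult_expectation:
  fixes Z :: "'a \<Rightarrow> real"
  assumes Z_meas: "Z \<in> borel_measurable M" and Z_bounds: "\<And>y. y \<in> space M \<Longrightarrow> 0 \<le> Z y \<and> Z y \<le> B"
  shows "variance Z \<le> B * expectation Z"
proof -
  have Z_int: "integrable M Z"
    by (rule integrable_const_bound[where B=B]) (use Z_bounds Z_meas in auto)
  have Z_sq_int: "integrable M (\<lambda>y. (Z y)\<^sup>2)"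
    by (rule integrable_const_bound[where B="B\<^sup>2"])
       (use Z_bounds Z_meas in \<open>auto intro!: power_mono\<close>)
  have "expectation (\<lambda>y. (Z y)\<^sup>2) \<le> expectation (\<lambda>y. B * Z y)"
    using Z_bounds Z_int Z_sq_int
    by (intro integral_mono) (auto simp: power2_eq_square intro: mult_right_mono)
  then have "expectation (\<lambda>y. (Z y)\<^sup>2) \<le> B * expectation Z" by simp
  then show ?thesis
    using variance_eq[OF Z_int Z_sq_int] zero_le_power2[of "expectation Z"] by linarith
qed

lemma distr_PiM_component_const:
  assumes "i \<in> I"
  shows "distr (PiM I (\<lambda>_. M)) M (\<lambda>X. X i) = M"
  by (rule distr_PiM_component) (simp_all add: prob_space_axioms assms)

lemma integrable_PiM_component:
  fixes f :: "'a \<Rightarrow> real"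
  assumes "i \<in> I" "integrable M f"
  shows "integrable (PiM I (\<lambda>_. M)) (\<lambda>X. f (X i))"
  using assms integrable_distr_eq[of "\<lambda>X. X i" "PiM I (\<lambda>_. M)" M f]
  by (simp add: distr_PiM_component_const)

lemma integral_PiM_component:
  fixes f :: "'a \<Rightarrow> real"
  assumes "i \<in> I" "f \<in> borel_measurable M"
  shows "(\<integral>X. f (X i) \<partial>PiM I (\<lambda>_. M)) = expectation f"
  using assms integral_distr[of "\<lambda>X. X i" "PiM I (\<lambda>_. M)" M f]
  by (simp add: distr_PiM_component_const)

lemma integral_PiM_components_mult:
  fixes f g :: "'a \<Rightarrow> real"
  assumes "finite I" "i \<in> I" "j \<in> I" "i \<noteq> j" "integrable M f" "integrable M g"
  shows "(\<integral>X. f (X i) * g (X j) \<partial>PiM I (\<lambda>_. M)) = expectation f * expectation g"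
proof -
  interpret product_sigma_finite "\<lambda>_. M" by unfold_locales
  define F where "F k = (if k = i then f else if k = j then g else (\<lambda>_. 1))" for k
  have "(\<Prod>k\<in>I. F k (X k)) = f (X i) * g (X j)" for X
    using assms(1-4) by (simp add: F_def prod.remove[of I i] prod.remove[of "I - {i}" j])
  moreover have "(\<Prod>k\<in>I. expectation (F k)) = expectation f * expectation g"
    using assms(1-4) by (simp add: F_def prob_space prod.remove[of I i] prod.remove[of "I - {i}" j])
  ultimately show ?thesis
    using product_integral_prod[of I F] assms by (simp add: F_def)
qed

lemma expectation_empirical_mean:
  fixes Z :: "'a \<Rightarrow> real" and n :: nat
  assumes "integrable M Z" "0 < n"
  shows "(\<integral>X. (1 / real n) * (\<Sum>i<n. Z (X i)) \<partial>PiM {..<n} (\<lambda>_. M)) = expectation Z"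
  using assms by (simp add: integrable_PiM_component integral_PiM_component)

lemma variance_empirical_mean:
  fixes Z :: "'a \<Rightarrow> real" and n :: nat
  assumes Z_meas: "Z \<in> borel_measurable M" and Z_bound: "\<And>y. y \<in> space M \<Longrightarrow> \<bar>Z y\<bar> \<le> B"
    and "0 < n"
  shows "(\<integral>X. ((1 / real n) * (\<Sum>i<n. Z (X i)) - expectation Z)\<^sup>2 \<partial>PiM {..<n} (\<lambda>_. M))
    = variance Z / real n"
proof -
  define \<mu> where "\<mu> = expectation Z"
  define D where "D i X = Z (X i) - \<mu>" for i :: nat and X :: "nat \<Rightarrow> 'a"
  interpret P: prob_space "PiM {..<n} (\<lambda>_. M)"
    by (intro prob_space_PiM prob_space_axioms)
  have Z_int: "integrable M Z"
    by (rule integrable_const_bound[where B=B]) (use Z_bound Z_meas in auto)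
  have dev_int: "integrable M (\<lambda>y. Z y - \<mu>)"
    using Z_int by simp
  have D_bound: "\<bar>D i X\<bar> \<le> B + \<bar>\<mu>\<bar>" if "X \<in> space (PiM {..<n} (\<lambda>_. M))" "i < n" for i X
  proof -
    have "X i \<in> space M" using that by (auto simp: space_PiM)
    then show ?thesis using Z_bound[of "X i"] by (simp add: D_def)
  qed
  have comp_meas: "(\<lambda>X. Z (X k)) \<in> borel_measurable (PiM {..<n} (\<lambda>_. M))" if "k < n" for k
    using measurable_compose[OF measurable_component_singleton[of k "{..<n}" "\<lambda>_. M"] Z_meas] that
    by simp
  have DD_int: "integrable (PiM {..<n} (\<lambda>_. M)) (\<lambda>X. D i X * D j X)" if "i < n" "j < n" for i j
  proof (rule P.integrable_const_bound[where B="(B + \<bar>\<mu>\<bar>) * (B + \<bar>\<mu>\<bar>)"])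
    show "AE X in PiM {..<n} (\<lambda>_. M). norm (D i X * D j X) \<le> (B + \<bar>\<mu>\<bar>) * (B + \<bar>\<mu>\<bar>)"
      using D_bound that by (intro AE_I2) (simp add: abs_mult mult_mono')
    show "(\<lambda>X. D i X * D j X) \<in> borel_measurable (PiM {..<n} (\<lambda>_. M))"
      unfolding D_def using comp_meas[OF that(1)] comp_meas[OF that(2)] by measurable
  qed
  have DD_integral: "(\<integral>X. D i X * D j X \<partial>PiM {..<n} (\<lambda>_. M)) = (if i = j then variance Z else 0)"
    if "i < n" "j < n" for i j
  proof (cases "i = j")
    case True
    then show ?thesis
      using integral_PiM_component[of i "{..<n}" "\<lambda>y. (Z y - \<mu>)\<^sup>2"] that Z_meas
      by (simp add: D_def \<mu>_def power2_eq_square)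
  next
    case False
    then show ?thesis
      using integral_PiM_components_mult[OF _ _ _ False dev_int dev_int] that Z_int
      by (simp add: D_def \<mu>_def prob_space)
  qed
  have sq_expand: "((1 / real n) * (\<Sum>i<n. Z (X i)) - \<mu>)\<^sup>2
      = (1 / real n)\<^sup>2 * (\<Sum>i<n. \<Sum>j<n. D i X * D j X)" for X
  proof -
    have "(1 / real n) * (\<Sum>i<n. Z (X i)) - \<mu> = (1 / real n) * (\<Sum>i<n. D i X)"
      using \<open>0 < n\<close> by (simp add: D_def sum_subtractf field_simps)
    then show ?thesis by (simp add: power2_eq_square sum_product power_mult_distrib)
  qed
  have "(\<integral>X. ((1 / real n) * (\<Sum>i<n. Z (X i)) - \<mu>)\<^sup>2 \<partial>PiM {..<n} (\<lambda>_. M))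
      = (1 / real n)\<^sup>2 * (\<Sum>i<n. \<Sum>j<n. \<integral>X. D i X * D j X \<partial>PiM {..<n} (\<lambda>_. M))"
  proof -
    have "(\<integral>X. (\<Sum>i<n. \<Sum>j<n. D i X * D j X) \<partial>PiM {..<n} (\<lambda>_. M))
        = (\<Sum>i<n. \<integral>X. (\<Sum>j<n. D i X * D j X) \<partial>PiM {..<n} (\<lambda>_. M))"
      by (rule Bochner_Integration.integral_sum) (auto intro!: Bochner_Integration.integrable_sum DD_int)
    also have "\<dots> = (\<Sum>i<n. \<Sum>j<n. \<integral>X. D i X * D j X \<partial>PiM {..<n} (\<lambda>_. M))"
      by (intro sum.cong refl Bochner_Integration.integral_sum) (auto intro!: DD_int)
    finally show ?thesis unfolding sq_expand by simp
  qed
  also have "\<dots> = (1 / real n)\<^sup>2 * (\<Sum>i<n. variance Z)"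
    by (simp add: DD_integral sum.delta)
  also have "\<dots> = variance Z / real n"
    using \<open>0 < n\<close> by (simp add: power2_eq_square)
  finally show ?thesis by (simp add: \<mu>_def)
qed

lemma nn_integral_sqrt_empirical_mean_diff_sq_le:
  fixes Z :: "'a \<Rightarrow> real" and n :: nat
  assumes Z_meas: "Z \<in> borel_measurable M"
    and Z_bounds: "\<And>y. y \<in> space M \<Longrightarrow> 0 \<le> Z y \<and> Z y \<le> B" and "0 < n" "0 \<le> t"
  shows "(\<integral>\<^sup>+X. ennreal ((sqrt ((1 / real n) * (\<Sum>i<n. Z (X i))) - sqrt t)\<^sup>2) \<partial>PiM {..<n} (\<lambda>_. M))
    \<le> ennreal (2 * (sqrt (expectation Z) - sqrt t)\<^sup>2 + (if t = 0 then 0 else 2 * (B / real n)))"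
proof -
  interpret P: prob_space "PiM {..<n} (\<lambda>_. M)"
    by (intro prob_space_PiM prob_space_axioms)
  have "0 \<le> B"
    using Z_bounds not_empty by fastforce
  have Z_int: "integrable M Z"
    by (rule integrable_const_bound[where B=B]) (use Z_bounds Z_meas in auto)
  have mean_meas: "(\<lambda>X. (1 / real n) * (\<Sum>i<n. Z (X i))) \<in> borel_measurable (PiM {..<n} (\<lambda>_. M))"
    using Z_meas by measurable
  have mean_bounds: "0 \<le> (1 / real n) * (\<Sum>i<n. Z (X i)) \<and> (1 / real n) * (\<Sum>i<n. Z (X i)) \<le> B"
    if "X \<in> space (PiM {..<n} (\<lambda>_. M))" for X
  proof -
    have "X i \<in> space M" if "i < n" for i using \<open>X \<in> _\<close> that by (auto simp: space_PiM)
    then have "0 \<le> (\<Sum>i<n. Z (X i))" "(\<Sum>i<n. Z (X i)) \<le> real n * B"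
      using Z_bounds by (auto intro: sum_nonneg order_trans[OF sum_mono[where g="\<lambda>_. B"]])
    then show ?thesis using \<open>0 < n\<close> by (simp add: field_simps)
  qed
  have "variance Z / real n \<le> B / real n * expectation Z"
    using variance_le_bound_mult_expectation[OF Z_meas Z_bounds] \<open>0 < n\<close>
    by (simp add: divide_right_mono)
  then have var: "(\<integral>X. ((1 / real n) * (\<Sum>i<n. Z (X i)) - expectation Z)\<^sup>2 \<partial>PiM {..<n} (\<lambda>_. M))
      \<le> B / real n * expectation Z"
    using variance_empirical_mean[OF Z_meas _ \<open>0 < n\<close>, of B] Z_bounds by fastforce
  have "(\<integral>\<^sup>+X. ennreal ((sqrt ((1 / real n) * (\<Sum>i<n. Z (X i))) - sqrt t)\<^sup>2) \<partial>PiM {..<n} (\<lambda>_. M))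
      = ennreal (\<integral>X. (sqrt ((1 / real n) * (\<Sum>i<n. Z (X i))) - sqrt t)\<^sup>2 \<partial>PiM {..<n} (\<lambda>_. M))"
    by (intro nn_integral_eq_integral P.integrable_sqrt_diff_sq[OF mean_meas mean_bounds \<open>0 \<le> t\<close>])
       simp_all
  also have "\<dots> \<le> ennreal (2 * (sqrt (expectation Z) - sqrt t)\<^sup>2 + (if t = 0 then 0 else 2 * (B / real n)))"
    by (intro ennreal_leI P.expectation_sqrt_diff_sq_le[OF mean_meas mean_bounds
          expectation_empirical_mean[OF Z_int \<open>0 < n\<close>] var])
       (use \<open>0 \<le> B\<close> \<open>0 \<le> t\<close> in auto)
  finally show ?thesis .
qed

end

lemma concave_sq_le_max_one_sq:
  fixes \<phi> :: "real \<Rightarrow> real"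
  assumes mono: "mono_on {0..} \<phi>" and conc: "concave_on {0..} \<phi>" and "\<phi> 0 = 0" and "0 < w"
  shows "(\<phi> \<bar>z\<bar>)\<^sup>2 \<le> max 1 ((z / w)\<^sup>2) * (\<phi> w)\<^sup>2"
proof -
  have \<phi>_nonneg: "0 \<le> \<phi> a" if "0 \<le> a" for a
    using mono_onD[OF mono, of 0 a] that \<open>\<phi> 0 = 0\<close> by simp
  have "\<phi> \<bar>z\<bar> \<le> max 1 \<bar>z / w\<bar> * \<phi> w"
  proof (cases "\<bar>z\<bar> \<le> w")
    case True
    then have "\<phi> \<bar>z\<bar> \<le> \<phi> w" using mono_onD[OF mono] by simp
    also have "\<dots> \<le> max 1 \<bar>z / w\<bar> * \<phi> w"
      using mult_right_mono[of 1 "max 1 \<bar>z / w\<bar>" "\<phi> w"] \<phi>_nonneg[of w] \<open>0 < w\<close> by simp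
    finally show ?thesis .
  next
    case False
    define t where "t = w / \<bar>z\<bar>"
    have t: "0 \<le> t" "t \<le> 1" using False \<open>0 < w\<close> by (auto simp: t_def)
    have "(1 - t) * \<phi> 0 + t * \<phi> \<bar>z\<bar> \<le> \<phi> ((1 - t) *\<^sub>R 0 + t *\<^sub>R \<bar>z\<bar>)"
      by (rule concave_onD[OF conc]) (use t in auto)
    moreover have "(1 - t) *\<^sub>R 0 + t *\<^sub>R \<bar>z\<bar> = w" using False \<open>0 < w\<close> by (simp add: t_def)
    ultimately have "t * \<phi> \<bar>z\<bar> \<le> \<phi> w" using \<open>\<phi> 0 = 0\<close> by simp
    then have "\<phi> \<bar>z\<bar> \<le> \<bar>z / w\<bar> * \<phi> w" using False \<open>0 < w\<close>
      by (simp add: t_def field_simps abs_divide)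
    also have "\<dots> \<le> max 1 \<bar>z / w\<bar> * \<phi> w"
      using \<phi>_nonneg[of w] \<open>0 < w\<close> by (intro mult_right_mono) auto
    finally show ?thesis .
  qed
  then have "(\<phi> \<bar>z\<bar>)\<^sup>2 \<le> (max 1 \<bar>z / w\<bar> * \<phi> w)\<^sup>2"
    using \<phi>_nonneg[of "\<bar>z\<bar>"] by (simp add: power_mono)
  also have "\<dots> = max 1 ((z / w)\<^sup>2) * (\<phi> w)\<^sup>2"
    unfolding power_mult_distrib
    by (metis abs_square_le_1 max.commute max_def power2_abs power_one)
  finally show ?thesis .
qed

lemma shift_sqrt_diff_sq_bound:
  fixes s :: "real \<Rightarrow> real"
  assumes s_meas: "s \<in> borel_measurable borel" and s_nonneg: "\<And>x. 0 \<le> s x"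
    and s_int: "has_bochner_integral lborel s 1"
  shows "integrable lborel (\<lambda>x. (sqrt (s (x + z)) - sqrt (s x))\<^sup>2)"
    and "(LINT x|lborel. (sqrt (s (x + z)) - sqrt (s x))\<^sup>2) \<le> 4"
proof -
  have s_int': "integrable lborel s" and s_total: "integral\<^sup>L lborel s = 1"
    using s_int by (auto simp: has_bochner_integral_iff)
  have shifted_int: "integrable lborel (\<lambda>x. s (x + z))"
    using lborel_integrable_real_affine[OF s_int', of 1 z] by (simp add: add.commute)
  have shifted_total: "(LINT x|lborel. s (x + z)) = 1"
    using lborel_integral_real_affine[of 1 s z] s_total by (simp add: add.commute)
  have bound: "(sqrt (s (x + z)) - sqrt (s x))\<^sup>2 \<le> 2 * s (x + z) + 2 * s x" for x
    using diff_sq_le_twice[where a="sqrt (s (x + z))" and b=0 and c="sqrt (s x)"] s_nonneg by simp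
  show int: "integrable lborel (\<lambda>x. (sqrt (s (x + z)) - sqrt (s x))\<^sup>2)"
    by (rule Bochner_Integration.integrable_bound[where f="\<lambda>x. 2 * s (x + z) + 2 * s x"])
       (use shifted_int s_int' s_meas bound s_nonneg in auto)
  have "(LINT x|lborel. (sqrt (s (x + z)) - sqrt (s x))\<^sup>2) \<le> (LINT x|lborel. 2 * s (x + z) + 2 * s x)"
    by (rule integral_mono) (use int shifted_int s_int' bound in auto)
  then show "(LINT x|lborel. (sqrt (s (x + z)) - sqrt (s x))\<^sup>2) \<le> 4"
    using shifted_int s_int' shifted_total s_total by simp
qed

lemma ennreal_integral_le_nn_integral:
  fixes f :: "'a \<Rightarrow> real"
  assumes "f \<in> borel_measurable M" "\<And>x. 0 \<le> f x"
  shows "ennreal (integral\<^sup>L M f) \<le> (\<integral>\<^sup>+x. ennreal (f x) \<partial>M)"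
  using assms by (cases "integrable M f") (simp_all add: nn_integral_eq_integral not_integrable_integral_eq)

lemma shift_sqrt_diff_sq_le_omega2:
  fixes s :: "real \<Rightarrow> real"
  assumes s_meas: "s \<in> borel_measurable borel" and s_nonneg: "\<And>x. 0 \<le> s x"
    and s_int: "has_bochner_integral lborel s 1" and \<omega>_le: "omega2 (\<lambda>x. sqrt (s x)) \<bar>z\<bar> \<le> c"
  shows "(\<integral>\<^sup>+x. ennreal ((sqrt (s (x + z)) - sqrt (s x))\<^sup>2) \<partial>lborel) \<le> ennreal (c\<^sup>2)"
proof -
  define J where "J z' = (LINT x|lborel. (sqrt (s (x + z')) - sqrt (s x))\<^sup>2)" for z'
  have J_nonneg: "0 \<le> J z'" for z'
    unfolding J_def by (rule Bochner_Integration.integral_nonneg) simp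
  have L2norm_shift: "L2norm (\<lambda>x. sqrt (s (x + z')) - sqrt (s x)) = sqrt (J z')" for z'
    by (simp add: L2norm_def J_def)
  have "bdd_above ((\<lambda>z'. L2norm (\<lambda>x. sqrt (s (x + z')) - sqrt (s x))) ` {z'. \<bar>z'\<bar> \<le> \<bar>z\<bar>})"
  proof (rule bdd_aboveI2[where M=2])
    fix z'
    show "L2norm (\<lambda>x. sqrt (s (x + z')) - sqrt (s x)) \<le> 2"
      using shift_sqrt_diff_sq_bound(2)[OF s_meas s_nonneg s_int, of z'] real_sqrt_le_mono[of _ 4]
      by (simp add: L2norm_shift J_def)
  qed
  then have "sqrt (J z) \<le> omega2 (\<lambda>x. sqrt (s x)) \<bar>z\<bar>"
    unfolding omega2_def L2norm_shift[symmetric] by (rule cSUP_upper[rotated]) simp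
  then have "(sqrt (J z))\<^sup>2 \<le> c\<^sup>2"
    using \<omega>_le J_nonneg[of z] by (intro power_mono) auto
  then have "J z \<le> c\<^sup>2"
    using J_nonneg[of z] by simp
  moreover have "(\<integral>\<^sup>+x. ennreal ((sqrt (s (x + z)) - sqrt (s x))\<^sup>2) \<partial>lborel) = ennreal (J z)"
    unfolding J_def
    by (rule nn_integral_eq_integral[OF shift_sqrt_diff_sq_bound(1)[OF s_meas s_nonneg s_int]]) simp
  ultimately show ?thesis by (simp add: ennreal_leI)
qed

lemma kernel_w_nonneg: "(\<And>x. 0 \<le> K x) \<Longrightarrow> 0 < w \<Longrightarrow> 0 \<le> kernel_w K w y"
  by (simp add: kernel_w_def)

lemma kernel_w_le: "(\<And>x. K x \<le> Mx) \<Longrightarrow> 0 < w \<Longrightarrow> kernel_w K w y \<le> Mx / w"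
  by (simp add: kernel_w_def divide_right_mono)

lemma nn_integral_kernel_w:
  fixes f :: "real \<Rightarrow> ennreal"
  assumes [measurable]: "K \<in> borel_measurable borel" "f \<in> borel_measurable borel" and "0 < w"
  shows "(\<integral>\<^sup>+z. ennreal (kernel_w K w z) * f (z / w) \<partial>lborel) = (\<integral>\<^sup>+u. ennreal (K u) * f u \<partial>lborel)"
proof -
  have "(\<integral>\<^sup>+z. ennreal (kernel_w K w z) * f (z / w) \<partial>lborel)
      = ennreal w * (\<integral>\<^sup>+u. ennreal (kernel_w K w (0 + w * u)) * f ((0 + w * u) / w) \<partial>lborel)"
    using nn_integral_real_affine[of "\<lambda>z. ennreal (kernel_w K w z) * f (z / w)" w 0] \<open>0 < w\<close>
    by (simp add: kernel_w_def)
  also have "\<dots> = (\<integral>\<^sup>+u. ennreal w * (ennreal (K u / w) * f u) \<partial>lborel)"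
    using \<open>0 < w\<close> by (simp add: kernel_w_def nn_integral_cmult)
  also have "\<dots> = (\<integral>\<^sup>+u. ennreal (K u) * f u \<partial>lborel)"
    using \<open>0 < w\<close> by (simp add: mult.assoc[symmetric] ennreal_mult'[symmetric])
  finally show ?thesis .
qed

lemma prob_space_density_kernel_w:
  assumes K_meas[measurable]: "K \<in> borel_measurable borel" and K_nonneg: "\<And>x. 0 \<le> K x"
    and K_int: "has_bochner_integral lborel K 1" and "0 < w"
  shows "prob_space (density lborel (\<lambda>y. ennreal (kernel_w K w (x - y))))"
proof (rule prob_spaceI)
  have "(\<integral>\<^sup>+y. ennreal (kernel_w K w (x - y)) \<partial>lborel) = (\<integral>\<^sup>+z. ennreal (kernel_w K w z) \<partial>lborel)"
    using nn_integral_real_affine[of "\<lambda>y. ennreal (kernel_w K w (x - y))" "-1" x] K_meas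
    by (simp add: kernel_w_def)
  also have "\<dots> = (\<integral>\<^sup>+u. ennreal (K u) \<partial>lborel)"
    using nn_integral_kernel_w[OF K_meas _ \<open>0 < w\<close>, of "\<lambda>_. 1"] by simp
  also have "\<dots> = 1"
    using K_int K_nonneg by (simp add: has_bochner_integral_iff nn_integral_eq_integral)
  finally show "emeasure (density lborel (\<lambda>y. ennreal (kernel_w K w (x - y))))
      (space (density lborel (\<lambda>y. ennreal (kernel_w K w (x - y))))) = 1"
    by (simp add: emeasure_density kernel_w_def)
qed

lemma sqrt_kernel_smoothing_diff_sq_le:
  fixes K s :: "real \<Rightarrow> real"
  assumes K_meas[measurable]: "K \<in> borel_measurable borel" and K_nonneg: "\<And>x. 0 \<le> K x"
    and K_int: "has_bochner_integral lborel K 1" and K_le: "\<And>x. K x \<le> Mx" and "0 < w"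
    and s_meas[measurable]: "s \<in> borel_measurable borel" and s_nonneg: "\<And>x. 0 \<le> s x"
    and s_int: "integrable lborel s" and "0 \<le> t"
  shows "ennreal ((sqrt (LINT y|lborel. kernel_w K w (x - y) * s y) - sqrt t)\<^sup>2)
    \<le> (\<integral>\<^sup>+y. ennreal (kernel_w K w (x - y) * (sqrt (s y) - sqrt t)\<^sup>2) \<partial>lborel)"
proof -
  let ?Q = "density lborel (\<lambda>y. ennreal (kernel_w K w (x - y)))"
  interpret Q: prob_space ?Q
    by (rule prob_space_density_kernel_w[OF K_meas K_nonneg K_int \<open>0 < w\<close>])
  have kernel_meas[measurable]: "(\<lambda>y. kernel_w K w (x - y)) \<in> borel_measurable borel"
    by (simp add: kernel_w_def)
  have kernel_nonneg: "0 \<le> kernel_w K w (x - y)" for y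
    using kernel_w_nonneg[OF K_nonneg \<open>0 < w\<close>] .
  have "integrable lborel (\<lambda>y. kernel_w K w (x - y) * s y)"
  proof (rule Bochner_Integration.integrable_bound[where f="\<lambda>y. Mx / w * s y"])
    have "kernel_w K w (x - y) * s y \<le> Mx / w * s y" for y
      using kernel_w_le[of K Mx w "x - y"] K_le \<open>0 < w\<close> s_nonneg[of y] by (intro mult_right_mono) auto
    then show "AE y in lborel. norm (kernel_w K w (x - y) * s y) \<le> norm (Mx / w * s y)"
      using kernel_nonneg s_nonneg K_le[of 0] K_nonneg[of 0] \<open>0 < w\<close> by (intro AE_I2) (simp add: abs_mult)
  qed (use s_int in simp_all)
  then have s_int_Q: "integrable ?Q s"
    by (simp add: integrable_density kernel_nonneg)
  have "Q.expectation s = (LINT y|lborel. kernel_w K w (x - y) * s y)"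
    by (simp add: integral_density kernel_nonneg)
  then have "(sqrt (LINT y|lborel. kernel_w K w (x - y) * s y) - sqrt t)\<^sup>2
      \<le> Q.expectation (\<lambda>y. (sqrt (s y) - sqrt t)\<^sup>2)"
    using Q.sqrt_expectation_diff_sq_le[OF _ _ s_int_Q \<open>0 \<le> t\<close>] s_nonneg by simp
  then have "ennreal ((sqrt (LINT y|lborel. kernel_w K w (x - y) * s y) - sqrt t)\<^sup>2)
      \<le> (\<integral>\<^sup>+y. ennreal ((sqrt (s y) - sqrt t)\<^sup>2) \<partial>?Q)"
    using ennreal_integral_le_nn_integral[of "\<lambda>y. (sqrt (s y) - sqrt t)\<^sup>2" ?Q]
    by (auto intro: order_trans[OF ennreal_leI])
  also have "\<dots> = (\<integral>\<^sup>+y. ennreal (kernel_w K w (x - y) * (sqrt (s y) - sqrt t)\<^sup>2) \<partial>lborel)"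
    by (simp add: nn_integral_density ennreal_mult kernel_nonneg)
  finally show ?thesis .
qed

lemma kernel_smoothing_bias_le:
  fixes K s \<phi> :: "real \<Rightarrow> real"
  assumes K_meas[measurable]: "K \<in> borel_measurable borel" and K_nonneg: "\<And>x. 0 \<le> K x"
    and K_int: "has_bochner_integral lborel K 1" and K_le: "\<And>x. K x \<le> Mx"
    and K_mom2: "integrable lborel (\<lambda>x. x\<^sup>2 * K x)"
    and s_meas[measurable]: "s \<in> borel_measurable borel" and s_nonneg: "\<And>x. 0 \<le> s x"
    and s_int: "has_bochner_integral lborel s 1"
    and \<phi>_mono: "mono_on {0..} \<phi>" and \<phi>_concave: "concave_on {0..} \<phi>" and "\<phi> 0 = 0"
    and \<omega>_le: "\<forall>\<eta>\<ge>0. omega2 (\<lambda>x. sqrt (s x)) \<eta> \<le> \<phi> \<eta>" and "0 < w"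
  shows "(\<integral>\<^sup>+x. ennreal ((sqrt (LINT y|lborel. kernel_w K w (x - y) * s y) - sqrt (s x))\<^sup>2) \<partial>lborel)
    \<le> ennreal ((LINT x|lborel. max 1 (x\<^sup>2) * K x) * (\<phi> w)\<^sup>2)"
proof -
  define D where "D x z = ennreal ((sqrt (s (x - z)) - sqrt (s x))\<^sup>2)" for x z
  have [measurable]: "(\<lambda>(x, z). D x z) \<in> borel_measurable (lborel \<Otimes>\<^sub>M lborel)"
    unfolding D_def by measurable
  have kernel_nonneg: "0 \<le> kernel_w K w z" for z
    using kernel_w_nonneg[OF K_nonneg \<open>0 < w\<close>] .
  have [measurable]: "kernel_w K w \<in> borel_measurable borel"
    unfolding kernel_w_def by measurable
  have "(\<integral>\<^sup>+x. ennreal ((sqrt (LINT y|lborel. kernel_w K w (x - y) * s y) - sqrt (s x))\<^sup>2) \<partial>lborel)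
      \<le> (\<integral>\<^sup>+x. (\<integral>\<^sup>+y. ennreal (kernel_w K w (x - y) * (sqrt (s y) - sqrt (s x))\<^sup>2) \<partial>lborel) \<partial>lborel)"
    using s_int s_nonneg
    by (intro nn_integral_mono sqrt_kernel_smoothing_diff_sq_le[OF K_meas K_nonneg K_int K_le \<open>0 < w\<close> s_meas])
       (auto simp: has_bochner_integral_iff)
  also have "\<dots> = (\<integral>\<^sup>+x. (\<integral>\<^sup>+z. ennreal (kernel_w K w z) * D x z \<partial>lborel) \<partial>lborel)"
  proof (rule nn_integral_cong)
    fix x
    show "(\<integral>\<^sup>+y. ennreal (kernel_w K w (x - y) * (sqrt (s y) - sqrt (s x))\<^sup>2) \<partial>lborel)
        = (\<integral>\<^sup>+z. ennreal (kernel_w K w z) * D x z \<partial>lborel)"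
      using nn_integral_real_affine[of "\<lambda>y. ennreal (kernel_w K w (x - y) * (sqrt (s y) - sqrt (s x))\<^sup>2)" "-1" x]
      by (simp add: D_def ennreal_mult kernel_nonneg)
  qed
  also have "\<dots> = (\<integral>\<^sup>+z. (\<integral>\<^sup>+x. ennreal (kernel_w K w z) * D x z \<partial>lborel) \<partial>lborel)"
    by (rule lborel_pair.Fubini'[symmetric]) measurable
  also have "\<dots> = (\<integral>\<^sup>+z. ennreal (kernel_w K w z) * (\<integral>\<^sup>+x. D x z \<partial>lborel) \<partial>lborel)"
    by (simp add: nn_integral_cmult)
  also have "\<dots> \<le> (\<integral>\<^sup>+z. ennreal (kernel_w K w z) * ennreal (max 1 ((z / w)\<^sup>2) * (\<phi> w)\<^sup>2) \<partial>lborel)"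
  proof (intro nn_integral_mono mult_left_mono)
    fix z
    have "(\<integral>\<^sup>+x. D x z \<partial>lborel) = (\<integral>\<^sup>+x. ennreal ((sqrt (s (x + - z)) - sqrt (s x))\<^sup>2) \<partial>lborel)"
      by (simp add: D_def)
    also have "\<dots> \<le> ennreal ((\<phi> \<bar>z\<bar>)\<^sup>2)"
      by (rule shift_sqrt_diff_sq_le_omega2[OF s_meas s_nonneg s_int]) (use \<omega>_le in simp)
    also have "\<dots> \<le> ennreal (max 1 ((z / w)\<^sup>2) * (\<phi> w)\<^sup>2)"
      using concave_sq_le_max_one_sq[OF \<phi>_mono \<phi>_concave \<open>\<phi> 0 = 0\<close> \<open>0 < w\<close>, of z]
      by (simp add: ennreal_leI)
    finally show "(\<integral>\<^sup>+x. D x z \<partial>lborel) \<le> ennreal (max 1 ((z / w)\<^sup>2) * (\<phi> w)\<^sup>2)" .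
  qed simp
  also have "\<dots> = (\<integral>\<^sup>+u. ennreal (K u) * ennreal (max 1 (u\<^sup>2) * (\<phi> w)\<^sup>2) \<partial>lborel)"
    by (rule nn_integral_kernel_w[OF K_meas _ \<open>0 < w\<close>]) measurable
  also have "\<dots> = ennreal ((LINT x|lborel. max 1 (x\<^sup>2) * K x) * (\<phi> w)\<^sup>2)"
  proof -
    have "integrable lborel (\<lambda>x. max 1 (x\<^sup>2) * K x)"
      by (rule Bochner_Integration.integrable_bound[where f="\<lambda>x. K x + x\<^sup>2 * K x"])
         (use K_int K_mom2 K_nonneg in \<open>auto simp: has_bochner_integral_iff abs_mult max_def distrib_right\<close>)
    then have "(\<integral>\<^sup>+u. ennreal (max 1 (u\<^sup>2) * K u * (\<phi> w)\<^sup>2) \<partial>lborel)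
        = ennreal (LINT u|lborel. max 1 (u\<^sup>2) * K u * (\<phi> w)\<^sup>2)"
      using K_nonneg by (intro nn_integral_eq_integral) auto
    moreover have "ennreal (K u) * ennreal (max 1 (u\<^sup>2) * (\<phi> w)\<^sup>2) = ennreal (max 1 (u\<^sup>2) * K u * (\<phi> w)\<^sup>2)"
      for u
      using K_nonneg[of u] by (simp add: ennreal_mult'[symmetric] mult_ac)
    ultimately show ?thesis by simp
  qed
  finally show ?thesis .
qed

lemma kde_pointwise_risk_le:
  fixes K s :: "real \<Rightarrow> real" and n :: nat
  assumes K_meas[measurable]: "K \<in> borel_measurable borel" and K_nonneg: "\<And>x. 0 \<le> K x"
    and K_le: "\<And>x. K x \<le> Mx"
    and s_meas[measurable]: "s \<in> borel_measurable borel" and s_nonneg: "\<And>x. 0 \<le> s x"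
    and P_prob: "prob_space (density lborel (\<lambda>x. ennreal (s x)))" and "0 < n" "0 < w"
  shows "(\<integral>\<^sup>+X. ennreal ((sqrt (kde K n w X x) - sqrt (s x))\<^sup>2) \<partial>PiM {..<n} (\<lambda>_. density lborel (\<lambda>x. ennreal (s x))))
    \<le> ennreal (2 * (sqrt (LINT y|lborel. kernel_w K w (x - y) * s y) - sqrt (s x))\<^sup>2
        + (if s x = 0 then 0 else 2 * (Mx / (real n * w))))"
proof -
  interpret P: prob_space "density lborel (\<lambda>x. ennreal (s x))" by (rule P_prob)
  have [measurable]: "(\<lambda>y. kernel_w K w (x - y)) \<in> borel_measurable borel"
    by (simp add: kernel_w_def)
  have mean: "P.expectation (\<lambda>y. kernel_w K w (x - y)) = (LINT y|lborel. kernel_w K w (x - y) * s y)"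
    by (simp add: integral_density s_nonneg mult.commute)
  have bounds: "0 \<le> kernel_w K w (x - y) \<and> kernel_w K w (x - y) \<le> Mx / w" for y
    using kernel_w_nonneg[of K w] kernel_w_le[of K Mx w] K_nonneg K_le \<open>0 < w\<close> by blast
  have "(\<integral>\<^sup>+X. ennreal ((sqrt (kde K n w X x) - sqrt (s x))\<^sup>2) \<partial>PiM {..<n} (\<lambda>_. density lborel (\<lambda>x. ennreal (s x))))
      \<le> ennreal (2 * (sqrt (P.expectation (\<lambda>y. kernel_w K w (x - y))) - sqrt (s x))\<^sup>2
        + (if s x = 0 then 0 else 2 * (Mx / w / real n)))"
    unfolding kde_def
    by (rule P.nn_integral_sqrt_empirical_mean_diff_sq_le) (use bounds \<open>0 < n\<close> s_nonneg in auto)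
  also have "(if s x = 0 then 0 else 2 * (Mx / w / real n)) = (if s x = 0 then 0 else 2 * (Mx / (real n * w)))"
    by (simp add: mult.commute)
  finally show ?thesis unfolding mean .
qed

lemma prob_space_density_pdf:
  fixes s :: "real \<Rightarrow> real"
  assumes "\<And>x. 0 \<le> s x" "has_bochner_integral lborel s 1"
  shows "prob_space (density lborel (\<lambda>x. ennreal (s x)))"
proof (rule prob_spaceI)
  have "(\<integral>\<^sup>+x. ennreal (s x) \<partial>lborel) = 1"
    using assms by (simp add: has_bochner_integral_iff nn_integral_eq_integral)
  then show "emeasure (density lborel (\<lambda>x. ennreal (s x))) (space (density lborel (\<lambda>x. ennreal (s x)))) = 1"
    using assms by (auto simp: emeasure_density has_bochner_integral_iff)
qed

lemma pdf_support_length_nonneg: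
  fixes s :: "real \<Rightarrow> real" and a L :: real
  assumes "has_bochner_integral lborel s 1" "\<And>x. x \<notin> {a..a + 2 * L} \<Longrightarrow> s x = 0"
  shows "0 \<le> L"
proof (rule ccontr)
  assume "\<not> 0 \<le> L"
  then have "s = (\<lambda>_. 0)" using assms(2) by fastforce
  then show False using assms(1) by (simp add: has_bochner_integral_iff)
qed

lemma kde_hellinger_risk_le:
  fixes K s \<phi> :: "real \<Rightarrow> real" and n :: nat
  assumes K_meas[measurable]: "K \<in> borel_measurable borel" and K_nonneg: "\<And>x. 0 \<le> K x"
    and K_int: "has_bochner_integral lborel K 1" and K_le: "\<And>x. K x \<le> Mx"
    and K_mom2: "integrable lborel (\<lambda>x. x\<^sup>2 * K x)"
    and s_meas[measurable]: "s \<in> borel_measurable borel" and s_nonneg: "\<And>x. 0 \<le> s x"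
    and s_int: "has_bochner_integral lborel s 1"
    and s_support: "\<And>x. x \<notin> {a..a + 2 * L} \<Longrightarrow> s x = 0"
    and \<phi>_mono: "mono_on {0..} \<phi>" and \<phi>_concave: "concave_on {0..} \<phi>" and "\<phi> 0 = 0"
    and \<omega>_le: "\<forall>\<eta>\<ge>0. omega2 (\<lambda>x. sqrt (s x)) \<eta> \<le> \<phi> \<eta>" and "0 < n" "0 < w"
  shows "(\<integral>\<^sup>+X. ennreal (hellinger2 (kde K n w X) s) \<partial>PiM {..<n} (\<lambda>_. density lborel (\<lambda>x. ennreal (s x))))
    \<le> ennreal ((LINT x|lborel. max 1 (x\<^sup>2) * K x) * (\<phi> w)\<^sup>2 + 2 * L * Mx / (real n * w))"
proof -
  let ?Q = "PiM {..<n} (\<lambda>_. density lborel (\<lambda>x. ennreal (s x)))"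
  define m where "m x = (LINT y|lborel. kernel_w K w (x - y) * s y)" for x
  define c where "c = Mx / (real n * w)"
  define D where "D x X = ennreal ((sqrt (kde K n w X x) - sqrt (s x))\<^sup>2)" for x X
  have P_prob: "prob_space (density lborel (\<lambda>x. ennreal (s x)))"
    by (rule prob_space_density_pdf[OF s_nonneg s_int])
  interpret Q: prob_space ?Q
    by (intro prob_space_PiM P_prob)
  interpret pair_sigma_finite lborel ?Q ..
  have [measurable]: "(\<lambda>(x, X). D x X) \<in> borel_measurable (lborel \<Otimes>\<^sub>M ?Q)"
    unfolding D_def kde_def kernel_w_def by measurable
  have "0 \<le> L" by (rule pdf_support_length_nonneg[OF s_int s_support])
  have "0 \<le> c"
    using K_nonneg[of 0] K_le[of 0] \<open>0 < w\<close> by (simp add: c_def)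
  have "(\<integral>\<^sup>+X. ennreal (hellinger2 (kde K n w X) s) \<partial>?Q) \<le> (\<integral>\<^sup>+X. ennreal (1 / 2) * (\<integral>\<^sup>+x. D x X \<partial>lborel) \<partial>?Q)"
  proof (rule nn_integral_mono)
    fix X
    have "ennreal (hellinger2 (kde K n w X) s)
        = ennreal (1 / 2) * ennreal (LINT x|lborel. (sqrt (kde K n w X x) - sqrt (s x))\<^sup>2)"
      unfolding hellinger2_def by (rule ennreal_mult') simp
    also have "\<dots> \<le> ennreal (1 / 2) * (\<integral>\<^sup>+x. D x X \<partial>lborel)"
      unfolding D_def
      by (intro mult_left_mono ennreal_integral_le_nn_integral) (simp_all add: kde_def kernel_w_def)
    finally show "ennreal (hellinger2 (kde K n w X) s) \<le> ennreal (1 / 2) * (\<integral>\<^sup>+x. D x X \<partial>lborel)" .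
  qed
  also have "\<dots> = (\<integral>\<^sup>+x. ennreal (1 / 2) * (\<integral>\<^sup>+X. D x X \<partial>?Q) \<partial>lborel)"
    by (simp add: nn_integral_cmult Fubini')
  also have "\<dots> \<le> (\<integral>\<^sup>+x. ennreal ((sqrt (m x) - sqrt (s x))\<^sup>2) + ennreal c * indicator {a..a + 2 * L} x \<partial>lborel)"
  proof (rule nn_integral_mono)
    fix x
    have "ennreal (1 / 2) * (\<integral>\<^sup>+X. D x X \<partial>?Q)
        \<le> ennreal (1 / 2) * ennreal (2 * (sqrt (m x) - sqrt (s x))\<^sup>2 + (if s x = 0 then 0 else 2 * c))"
      unfolding D_def m_def c_def
      by (intro mult_left_mono kde_pointwise_risk_le[OF K_meas K_nonneg K_le s_meas s_nonneg P_prob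
            \<open>0 < n\<close> \<open>0 < w\<close>]) simp
    also have "\<dots> = ennreal (1 / 2 * (2 * (sqrt (m x) - sqrt (s x))\<^sup>2 + (if s x = 0 then 0 else 2 * c)))"
      by (rule ennreal_mult'[symmetric]) simp
    also have "\<dots> \<le> ennreal ((sqrt (m x) - sqrt (s x))\<^sup>2 + c * indicator {a..a + 2 * L} x)"
      using s_support[of x] \<open>0 \<le> c\<close> by (intro ennreal_leI) (auto simp: indicator_def)
    also have "\<dots> = ennreal ((sqrt (m x) - sqrt (s x))\<^sup>2) + ennreal c * indicator {a..a + 2 * L} x"
      using \<open>0 \<le> c\<close> by (simp add: ennreal_plus ennreal_mult indicator_def)
    finally show "ennreal (1 / 2) * (\<integral>\<^sup>+X. D x X \<partial>?Q)
        \<le> ennreal ((sqrt (m x) - sqrt (s x))\<^sup>2) + ennreal c * indicator {a..a + 2 * L} x" .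
  qed
  also have "\<dots> = (\<integral>\<^sup>+x. ennreal ((sqrt (m x) - sqrt (s x))\<^sup>2) \<partial>lborel) + ennreal c * ennreal (2 * L)"
    using \<open>0 \<le> L\<close> by (simp add: nn_integral_add m_def kernel_w_def nn_integral_cmult_indicator)
  also have "\<dots> \<le> ennreal ((LINT x|lborel. max 1 (x\<^sup>2) * K x) * (\<phi> w)\<^sup>2) + ennreal c * ennreal (2 * L)"
    unfolding m_def
    by (intro add_right_mono kernel_smoothing_bias_le[OF K_meas K_nonneg K_int K_le K_mom2 s_meas
          s_nonneg s_int \<phi>_mono \<phi>_concave \<open>\<phi> 0 = 0\<close> \<omega>_le \<open>0 < w\<close>])
  also have "\<dots> = ennreal ((LINT x|lborel. max 1 (x\<^sup>2) * K x) * (\<phi> w)\<^sup>2 + c * (2 * L))"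
    using \<open>0 \<le> c\<close> \<open>0 \<le> L\<close> K_nonneg
    by (simp add: ennreal_mult'[symmetric] ennreal_plus Bochner_Integration.integral_nonneg)
  also have "c * (2 * L) = 2 * L * Mx / (real n * w)"
    by (simp add: c_def)
  finally show ?thesis .
qed

theorem theorem2:
  fixes K :: "real \<Rightarrow> real"
  assumes K_meas: "K \<in> borel_measurable borel"
    and K_nonneg: "\<And>x. K x \<ge> 0"
    and K_int: "has_bochner_integral lborel K 1"
    and K_bdd: "bdd_above (range K)"
    and K_mom2: "integrable lborel (\<lambda>x. x\<^sup>2 * K x)"
    and K_left: "\<exists>a. monotone_either {..a} K"
    and K_right: "\<exists>b. monotone_either {b..} K"
  shows "\<exists>C::real. (unimodal K \<longrightarrow> C = 1) \<and>
    (\<forall>(s::real \<Rightarrow> real) (L::real) (\<phi>::real \<Rightarrow> real) (n::nat) (w::real).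
      s \<in> borel_measurable borel \<longrightarrow> (\<forall>x. s x \<ge> 0) \<longrightarrow>
      has_bochner_integral lborel s 1 \<longrightarrow>
      (\<exists>a. \<forall>x. x \<notin> {a..a + 2 * L} \<longrightarrow> s x = 0) \<longrightarrow>
      mono_on {0..} \<phi> \<longrightarrow> concave_on {0..} \<phi> \<longrightarrow> \<phi> 0 = 0 \<longrightarrow>
      (\<forall>\<eta>\<ge>0. omega2 (\<lambda>x. sqrt (s x)) \<eta> \<le> \<phi> \<eta>) \<longrightarrow>
      n \<ge> 1 \<longrightarrow> w > 0 \<longrightarrow>
      (\<integral>\<^sup>+ X. ennreal (hellinger2 (kde K n w X) s)
          \<partial>(PiM {..<n} (\<lambda>_. density lborel (\<lambda>x. ennreal (s x)))))
        \<le> ennreal (2 * (LINT x|lborel. max 1 (x\<^sup>2) * K x) * (\<phi> w)\<^sup>2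
                   + 2 * L * (SUP x. K x) / (real n * w) + C / real n))"
proof (intro exI[of _ 1] conjI impI allI)
  fix s :: "real \<Rightarrow> real" and L :: real and \<phi> :: "real \<Rightarrow> real" and n :: nat and w :: real
  assume s_meas: "s \<in> borel_measurable borel" and s_nonneg: "\<forall>x. s x \<ge> 0"
    and s_int: "has_bochner_integral lborel s 1"
    and s_support: "\<exists>a. \<forall>x. x \<notin> {a..a + 2 * L} \<longrightarrow> s x = 0"
    and \<phi>_mono: "mono_on {0..} \<phi>" and \<phi>_concave: "concave_on {0..} \<phi>" and "\<phi> 0 = 0"
    and \<omega>_le: "\<forall>\<eta>\<ge>0. omega2 (\<lambda>x. sqrt (s x)) \<eta> \<le> \<phi> \<eta>" and "n \<ge> 1" and "w > 0"
  obtain a where support: "\<And>x. x \<notin> {a..a + 2 * L} \<Longrightarrow> s x = 0"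
    using s_support by blast
  have K_le: "K x \<le> (SUP x. K x)" for x
    by (rule cSUP_upper[OF _ K_bdd]) simp
  have "0 \<le> (LINT x|lborel. max 1 (x\<^sup>2) * K x) * (\<phi> w)\<^sup>2"
    using K_nonneg by (simp add: Bochner_Integration.integral_nonneg)
  then have slack: "(LINT x|lborel. max 1 (x\<^sup>2) * K x) * (\<phi> w)\<^sup>2 + 2 * L * (SUP x. K x) / (real n * w)
      \<le> 2 * (LINT x|lborel. max 1 (x\<^sup>2) * K x) * (\<phi> w)\<^sup>2 + 2 * L * (SUP x. K x) / (real n * w) + 1 / real n"
    by (simp add: mult.commute add_nonneg_nonneg)
  show "(\<integral>\<^sup>+ X. ennreal (hellinger2 (kde K n w X) s)
          \<partial>(PiM {..<n} (\<lambda>_. density lborel (\<lambda>x. ennreal (s x)))))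
        \<le> ennreal (2 * (LINT x|lborel. max 1 (x\<^sup>2) * K x) * (\<phi> w)\<^sup>2
                   + 2 * L * (SUP x. K x) / (real n * w) + 1 / real n)"
    by (rule order_trans[OF kde_hellinger_risk_le[OF K_meas K_nonneg K_int K_le K_mom2 s_meas _ s_int
          support \<phi>_mono \<phi>_concave \<open>\<phi> 0 = 0\<close> \<omega>_le] ennreal_leI[OF slack]])
       (use s_nonneg \<open>n \<ge> 1\<close> \<open>w > 0\<close> in auto)
qed simp

end
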